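(* Let $P\subset\mathbb{R}^2$ be any set with $0\in P$ such that the contingent cone $T_P(0)$ contains neither $(1,\tfrac12)$ nor $(1,-\tfrac12)$. For $p\in P$, $x\in\mathbb{R}^2$, $y\in\mathbb{R}^2$ let $G(p,x,y):=(x_1-p_1-\tfrac12y_1-\tfrac12y_2,\ -x_2-p_2+y_1-y_2)$, $\varphi_1(x):=-\tfrac12x_1+x_2$, $\varphi_2(x):=-\tfrac12x_1-x_2$, and consider the KKT system (for minimizing $\tfrac12x_1^2-\tfrac12x_2^2-\langle p,x\rangle$ subject to $\varphi_1(x)\le0,\varphi_2(x)\le0$) $$g(p,x,y):=(G(p,x,y),(\varphi(x),y))\in C:=\{0_{\mathbb{R}^2}\}\times\operatorname{gph}N_{\mathbb{R}^2_-},$$ with solution map $\Gamma(p):=\{(x,y): g(p,x,y)\in C\}$. Then this system enjoys Robinson stability at $(\bar p,\bar x,\bar y)=(0,0,0)$, and $\Gamma:P\rightrightarrows\mathbb{R}^2\times\mathbb{R}^2$ is Lipschitz-like around $(0,(0,0))$.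
   Context: $\operatorname{gph}N_{\mathbb{R}^2_-}=\{(a,y)\in\mathbb{R}^2\times\mathbb{R}^2: a\le0,\ y\ge0,\ a_iy_i=0,\ i=1,2\}$. Contingent cone $T_P(0)=\{w:\exists t_k\downarrow0,w_k\to w,\ t_kw_k\in P\}$. Robinson stability at $(0,\xi_0)$: there exist $\kappa\ge0$ and neighborhoods $V$ of $0$ in $P$, $U$ of $\xi_0$ with $\operatorname{dist}(\xi;\Gamma(p))\le\kappa\operatorname{dist}(g(p,\xi);C)$ for $(p,\xi)\in V\times U$. Lipschitz-like: there exist $\ell\ge0$ and neighborhoods $V$ of $0$ in $P$, $U$ of $(0,0)$ with $\Gamma(p)\cap U\subset\Gamma(p')+\ell\|p-p'\|\mathbb{B}$ for all $p,p'\in V$. *)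

theory Defs
  imports "HOL-Analysis.Analysis"
begin

text \<open>R^2 is modelled as real \<times> real (product norm = Euclidean norm).\<close>

definition contingent_cone :: "(real \<times> real) set \<Rightarrow> real \<times> real \<Rightarrow> (real \<times> real) set" where
  "contingent_cone P x = {w. \<exists>t wk. (\<forall>k. t k > 0) \<and> decseq t \<and> t \<longlonglongrightarrow> 0 \<and>
       wk \<longlonglongrightarrow> w \<and> (\<forall>k. x + t k *\<^sub>R wk k \<in> P)}"

definition gph_N_orthant :: "((real \<times> real) \<times> (real \<times> real)) set" where
  "gph_N_orthant = {(a, y). fst a \<le> 0 \<and> snd a \<le> 0 \<and> fst y \<ge> 0 \<and> snd y \<ge> 0 \<and>
       fst a * fst y = 0 \<and> snd a * snd y = 0}"

definition C_set :: "((real \<times> real) \<times> ((real \<times> real) \<times> (real \<times> real))) set" where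
  "C_set = {(0::real \<times> real)} \<times> gph_N_orthant"

definition G_map :: "real \<times> real \<Rightarrow> real \<times> real \<Rightarrow> real \<times> real \<Rightarrow> real \<times> real" where
  "G_map p x y = (fst x - fst p - (1/2) * fst y - (1/2) * snd y,
                  - snd x - snd p + fst y - snd y)"

definition phi_map :: "real \<times> real \<Rightarrow> real \<times> real" where
  "phi_map x = (- (1/2) * fst x + snd x, - (1/2) * fst x - snd x)"

definition g_map :: "real \<times> real \<Rightarrow> (real \<times> real) \<times> (real \<times> real)
                      \<Rightarrow> (real \<times> real) \<times> ((real \<times> real) \<times> (real \<times> real))" where
  "g_map p \<xi> = (G_map p (fst \<xi>) (snd \<xi>), (phi_map (fst \<xi>), snd \<xi>))"

definition Gamma_map :: "real \<times> real \<Rightarrow> ((real \<times> real) \<times> (real \<times> real)) set" where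
  "Gamma_map p = {\<xi>. g_map p \<xi> \<in> C_set}"

text \<open>Robinson stability of the system g(p,xi) in C with solution map Gamma = {xi. g p xi in C},
  at (pbar, xibar), over the parameter set P.  The distance to the empty set is +infinity,
  hence for an empty Gamma(p) the inequality fails; this is encoded by requiring Gamma(p) nonempty.\<close>
definition robinson_stable ::
  "('p::metric_space) set \<Rightarrow> ('p \<Rightarrow> 'x::metric_space \<Rightarrow> 'z::metric_space) \<Rightarrow> 'z set \<Rightarrow> 'p \<Rightarrow> 'x \<Rightarrow> bool" where
  "robinson_stable P g C pbar xibar \<longleftrightarrow>
     (\<exists>\<kappa>\<ge>0. \<exists>V U. open V \<and> pbar \<in> V \<and> open U \<and> xibar \<in> U \<and>
        (\<forall>p\<in>P \<inter> V. \<forall>\<xi>\<in>U.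
           {\<eta>. g p \<eta> \<in> C} \<noteq> {} \<and>
           infdist \<xi> {\<eta>. g p \<eta> \<in> C} \<le> \<kappa> * infdist (g p \<xi>) C))"

definition lipschitz_like ::
  "('p::metric_space) set \<Rightarrow> ('p \<Rightarrow> 'x::metric_space set) \<Rightarrow> 'p \<Rightarrow> 'x \<Rightarrow> bool" where
  "lipschitz_like P S pbar xibar \<longleftrightarrow>
     (\<exists>L\<ge>0. \<exists>V U. open V \<and> pbar \<in> V \<and> open U \<and> xibar \<in> U \<and>
        (\<forall>p\<in>P \<inter> V. \<forall>p'\<in>P \<inter> V. \<forall>\<xi>\<in>S p \<inter> U.
           \<exists>\<xi>'\<in>S p'. dist \<xi> \<xi>' \<le> L * dist p p'))"

end

theory Submission
  imports Defs
begin

text \<open>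
  \<Gamma>(p) is the solution set of a linear complementarity problem. It is covered by four affine
  pieces, one for each set of active constraints, each valid on a closed polyhedral cone of
  parameters. If (x, y) solves the system up to a residual \<epsilon>, its complementarity pattern selects
  a piece whose formula is within O(\<epsilon>) of (x, y) and whose cone contains p up to O(\<epsilon>). If p is
  in that cone, or in an adjacent cone whose piece agrees with it on the common boundary ray, this
  yields a solution within O(\<epsilon>). The exception is the pair of rays through (2, \<plusminus>1): beyond the ray
  through (2, 1) only the piece with the first constraint active survives, and it is far from the
  unconstrained piece (symmetrically for (2, -1)). The contingent cone hypothesis keeps P inside a
  sector avoiding these rays, so there a parameter O(\<epsilon>)-close to them has |p| = O(\<epsilon>), and since
  solutions of size O(|p|) always exist, everything in sight is O(\<epsilon>)-close to \<Gamma>(p).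
  Lipschitz-likeness then follows from this error bound because g is 1-Lipschitz in p.
\<close>

definition kkt :: "real \<Rightarrow> real \<Rightarrow> real \<Rightarrow> real \<Rightarrow> real \<Rightarrow> real \<Rightarrow> bool" where
  "kkt p1 p2 x1 x2 y1 y2 \<longleftrightarrow>
     x1 - p1 - (1/2)*y1 - (1/2)*y2 = 0 \<and> - x2 - p2 + y1 - y2 = 0 \<and>
     -(1/2)*x1 + x2 \<le> 0 \<and> -(1/2)*x1 - x2 \<le> 0 \<and> y1 \<ge> 0 \<and> y2 \<ge> 0 \<and>
     (-(1/2)*x1 + x2) * y1 = 0 \<and> (-(1/2)*x1 - x2) * y2 = 0"

definition near_kkt :: "real \<Rightarrow> real \<Rightarrow> real \<Rightarrow> real \<Rightarrow> real \<Rightarrow> real \<Rightarrow> real \<Rightarrow> bool" where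
  "near_kkt p1 p2 a b c d K \<longleftrightarrow> (\<exists>x1 x2 y1 y2. kkt p1 p2 x1 x2 y1 y2 \<and>
     \<bar>a - x1\<bar> + \<bar>b - x2\<bar> + \<bar>c - y1\<bar> + \<bar>d - y2\<bar> \<le> K)"

lemma Gamma_map_eq_kkt:
  "((x1, x2), (y1, y2)) \<in> Gamma_map (p1, p2) \<longleftrightarrow> kkt p1 p2 x1 x2 y1 y2"
  unfolding Gamma_map_def g_map_def G_map_def phi_map_def C_set_def gph_N_orthant_def kkt_def
  by (simp add: zero_prod_def)

lemma kkt_reflect: "kkt p1 p2 x1 x2 y1 y2 \<Longrightarrow> kkt p1 (-p2) x1 (-x2) y2 y1"
  unfolding kkt_def by (simp add: mult.commute)

lemma kkt_inactive: "p1 + 2*p2 \<ge> 0 \<Longrightarrow> p1 - 2*p2 \<ge> 0 \<Longrightarrow> kkt p1 p2 p1 (-p2) 0 0"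
  unfolding kkt_def by auto

lemma kkt_first_active: "p1 + 2*p2 \<ge> 0 \<Longrightarrow> 2*p1 + p2 \<ge> 0 \<Longrightarrow>
    kkt p1 p2 ((4/3)*p1 + (2/3)*p2) ((2/3)*p1 + (1/3)*p2) ((2/3)*p1 + (4/3)*p2) 0"
  unfolding kkt_def by (auto simp: field_simps)

lemma kkt_second_active: "p1 - 2*p2 \<ge> 0 \<Longrightarrow> 2*p1 - p2 \<ge> 0 \<Longrightarrow>
    kkt p1 p2 ((4/3)*p1 - (2/3)*p2) (-(2/3)*p1 + (1/3)*p2) 0 ((2/3)*p1 - (4/3)*p2)"
  unfolding kkt_def by (auto simp: field_simps)

lemma kkt_both_active: "-2*p1 + p2 \<ge> 0 \<Longrightarrow> -2*p1 - p2 \<ge> 0 \<Longrightarrow>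
    kkt p1 p2 0 0 (-p1 + (1/2)*p2) (-p1 - (1/2)*p2)"
  unfolding kkt_def by (auto simp: field_simps)

lemma kkt_solution_bounded:
  "\<exists>x1 x2 y1 y2. kkt p1 p2 x1 x2 y1 y2 \<and> \<bar>x1\<bar> + \<bar>x2\<bar> + \<bar>y1\<bar> + \<bar>y2\<bar> \<le> 4*(\<bar>p1\<bar> + \<bar>p2\<bar>)"
    (is "\<exists>x1 x2 y1 y2. ?bounded_solution x1 x2 y1 y2")
proof -
  have witness: "?bounded_solution x1 x2 y1 y2 \<Longrightarrow> ?thesis" for x1 x2 y1 y2
    by blast
  consider "p1 + 2*p2 \<ge> 0" "p1 - 2*p2 \<ge> 0" | "p1 + 2*p2 \<ge> 0" "2*p1 + p2 \<ge> 0"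
    | "p1 - 2*p2 \<ge> 0" "2*p1 - p2 \<ge> 0" | "-2*p1 + p2 \<ge> 0" "-2*p1 - p2 \<ge> 0"
    by linarith
  then show ?thesis
  proof cases
    case 1
    show ?thesis by (rule witness) (use kkt_inactive[OF 1] 1 in \<open>auto simp: abs_real_def\<close>)
  next
    case 2
    show ?thesis by (rule witness) (use kkt_first_active[OF 2] 2 in \<open>auto simp: abs_real_def\<close>)
  next
    case 3
    show ?thesis by (rule witness) (use kkt_second_active[OF 3] 3 in \<open>auto simp: abs_real_def\<close>)
  next
    case 4
    show ?thesis by (rule witness) (use kkt_both_active[OF 4] 4 in \<open>auto simp: abs_real_def\<close>)
  qed
qed

lemma Gamma_map_nonempty: "Gamma_map p \<noteq> {}"
proof -
  obtain x1 x2 y1 y2 where "kkt (fst p) (snd p) x1 x2 y1 y2"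
    using kkt_solution_bounded by blast
  then have "((x1, x2), (y1, y2)) \<in> Gamma_map p"
    using Gamma_map_eq_kkt[of x1 x2 y1 y2 "fst p" "snd p"] by simp
  then show ?thesis by blast
qed

lemma near_kktI:
  "kkt p1 p2 x1 x2 y1 y2 \<Longrightarrow> \<bar>a - x1\<bar> + \<bar>b - x2\<bar> + \<bar>c - y1\<bar> + \<bar>d - y2\<bar> \<le> K \<Longrightarrow>
    near_kkt p1 p2 a b c d K"
  unfolding near_kkt_def by blast

lemma near_kkt_self: "kkt p1 p2 a b c d \<Longrightarrow> K \<ge> 0 \<Longrightarrow> near_kkt p1 p2 a b c d K"
  unfolding near_kkt_def by force

lemma near_kkt_mono: "near_kkt p1 p2 a b c d K \<Longrightarrow> K \<le> K' \<Longrightarrow> near_kkt p1 p2 a b c d K'"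
  unfolding near_kkt_def by force

lemma near_kkt_trans:
  assumes "near_kkt p1 p2 a b c d K" "\<bar>x1 - a\<bar> + \<bar>x2 - b\<bar> + \<bar>y1 - c\<bar> + \<bar>y2 - d\<bar> \<le> L"
  shows "near_kkt p1 p2 x1 x2 y1 y2 (L + K)"
proof -
  obtain z1 z2 z3 z4 where z: "kkt p1 p2 z1 z2 z3 z4"
    and K: "\<bar>a - z1\<bar> + \<bar>b - z2\<bar> + \<bar>c - z3\<bar> + \<bar>d - z4\<bar> \<le> K"
    using assms(1) unfolding near_kkt_def by blast
  have "\<bar>x1 - z1\<bar> + \<bar>x2 - z2\<bar> + \<bar>y1 - z3\<bar> + \<bar>y2 - z4\<bar> \<le> L + K"
    using abs_triangle_ineq[of "x1 - a" "a - z1"] abs_triangle_ineq[of "x2 - b" "b - z2"]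
      abs_triangle_ineq[of "y1 - c" "c - z3"] abs_triangle_ineq[of "y2 - d" "d - z4"] K assms(2)
    by simp
  then show ?thesis by (rule near_kktI[OF z])
qed

lemma near_kkt_reflect:
  assumes "near_kkt p1 p2 x1 x2 y1 y2 K"
  shows "near_kkt p1 (-p2) x1 (-x2) y2 y1 K"
proof -
  obtain z1 z2 z3 z4 where z: "kkt p1 p2 z1 z2 z3 z4"
    and K: "\<bar>x1 - z1\<bar> + \<bar>x2 - z2\<bar> + \<bar>y1 - z3\<bar> + \<bar>y2 - z4\<bar> \<le> K"
    using assms unfolding near_kkt_def by blast
  have "\<bar>-x2 - -z2\<bar> = \<bar>x2 - z2\<bar>"
    by linarith
  then show ?thesis
    using K by (intro near_kktI[OF kkt_reflect[OF z]]) linarith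
qed

lemma near_kkt_small:
  assumes "\<bar>a\<bar> + \<bar>b\<bar> + \<bar>c\<bar> + \<bar>d\<bar> \<le> 4*(\<bar>p1\<bar> + \<bar>p2\<bar>)" "8*(\<bar>p1\<bar> + \<bar>p2\<bar>) \<le> K"
  shows "near_kkt p1 p2 a b c d K"
proof -
  obtain x1 x2 y1 y2 where x: "kkt p1 p2 x1 x2 y1 y2"
    and bound: "\<bar>x1\<bar> + \<bar>x2\<bar> + \<bar>y1\<bar> + \<bar>y2\<bar> \<le> 4*(\<bar>p1\<bar> + \<bar>p2\<bar>)"
    using kkt_solution_bounded by blast
  have "\<bar>a - x1\<bar> + \<bar>b - x2\<bar> + \<bar>c - y1\<bar> + \<bar>d - y2\<bar> \<le> K"
    using abs_triangle_ineq4[of a x1] abs_triangle_ineq4[of b x2] abs_triangle_ineq4[of c y1]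
      abs_triangle_ineq4[of d y2] bound assms by linarith
  then show ?thesis by (rule near_kktI[OF x])
qed

text \<open>The quantitative form of the contingent cone hypothesis: p stays away from the rays
  through (2, 1) and (2, -1), across which the solution pieces do not fit together.\<close>

definition cone_bounded :: "real \<Rightarrow> real \<Rightarrow> real \<Rightarrow> bool" where
  "cone_bounded D p1 p2 \<longleftrightarrow> (p1 > 0 \<longrightarrow> p1 \<le> D * \<bar>p1 + 2*p2\<bar> \<and> p1 \<le> D * \<bar>p1 - 2*p2\<bar>)"

lemma cone_bounded_reflect: "cone_bounded D p1 (-p2) \<longleftrightarrow> cone_bounded D p1 p2"
  unfolding cone_bounded_def by auto

lemma cone_bounded_le:
  assumes "cone_bounded D p1 p2" "D \<ge> 0" "p1 > 0"
    and "\<bar>p1 + 2*p2\<bar> \<le> 2*w \<or> \<bar>p1 - 2*p2\<bar> \<le> 2*w"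
  shows "p1 \<le> 2 * (D * w)"
proof -
  have "D * \<bar>p1 + 2*p2\<bar> \<le> D * (2*w) \<or> D * \<bar>p1 - 2*p2\<bar> \<le> D * (2*w)"
    using assms(2,4) mult_left_mono by blast
  then show ?thesis
    using assms(1,3) unfolding cone_bounded_def by auto
qed

lemma near_kkt_inactive:
  assumes w: "0 \<le> w" and D: "1 \<le> D" and cone: "cone_bounded D p1 p2"
    and dom: "p1 + 2*p2 \<ge> -w" "p1 - 2*p2 \<ge> -w"
  shows "near_kkt p1 p2 p1 (-p2) 0 0 (100 * (D * w))"
proof (cases "p1 + 2*p2 \<ge> 0 \<and> p1 - 2*p2 \<ge> 0")
  case True
  then show ?thesis using w D by (intro near_kkt_self kkt_inactive) auto
next
  case False
  define W where "W = D * w"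
  have "w \<le> W" using mult_right_mono[OF D w] by (simp add: W_def)
  moreover have "p1 \<le> 2 * W"
  proof (cases "p1 > 0")
    case True
    with False dom D show ?thesis unfolding W_def by (intro cone_bounded_le[OF cone]) auto
  qed (use w \<open>w \<le> W\<close> in linarith)
  ultimately show ?thesis
    unfolding W_def[symmetric] using dom by (intro near_kkt_small) (simp_all add: abs_real_def)
qed

lemma near_kkt_first_active:
  assumes w: "0 \<le> w" and D: "1 \<le> D" and cone: "cone_bounded D p1 p2"
    and dom: "p1 + 2*p2 \<ge> -w" "2*p1 + p2 \<ge> -w"
  shows "near_kkt p1 p2 ((4/3)*p1 + (2/3)*p2) ((2/3)*p1 + (1/3)*p2) ((2/3)*p1 + (4/3)*p2) 0
    (100 * (D * w))"
proof -
  define W where "W = D * w"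
  have "w \<le> W" using mult_right_mono[OF D w] by (simp add: W_def)
  consider "p1 + 2*p2 \<ge> 0" "2*p1 + p2 \<ge> 0" | "2*p1 + p2 < 0" "-2*p1 + p2 \<ge> 0"
    | "p1 + 2*p2 < 0 \<or> 2*p1 + p2 < 0 \<and> -2*p1 + p2 < 0"
    by linarith
  then show ?thesis
  proof cases
    case 1
    then show ?thesis using w D by (intro near_kkt_self kkt_first_active) auto
  next
    case 2
    have "kkt p1 p2 0 0 (-p1 + (1/2)*p2) (-p1 - (1/2)*p2)"
      using 2 by (intro kkt_both_active) auto
    then show ?thesis
      unfolding W_def[symmetric]
      by (rule near_kktI) (use 2 dom \<open>w \<le> W\<close> in \<open>simp add: abs_real_def; linarith\<close>)
  next
    case 3
    have "p1 \<le> 2 * W"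
    proof (cases "p1 > 0 \<and> p1 + 2*p2 < 0")
      case True
      with dom D show ?thesis unfolding W_def by (intro cone_bounded_le[OF cone]) auto
    qed (use 3 dom w \<open>w \<le> W\<close> in linarith)
    with 3 dom \<open>w \<le> W\<close> show ?thesis
      unfolding W_def[symmetric] by (intro near_kkt_small) (simp add: abs_real_def; linarith)+
  qed
qed

lemma near_kkt_second_active:
  assumes "0 \<le> w" "1 \<le> D" "cone_bounded D p1 p2"
    and "p1 - 2*p2 \<ge> -w" "2*p1 - p2 \<ge> -w"
  shows "near_kkt p1 p2 ((4/3)*p1 - (2/3)*p2) (-(2/3)*p1 + (1/3)*p2) 0 ((2/3)*p1 - (4/3)*p2)
    (100 * (D * w))"
proof -
  have "near_kkt p1 (-p2) ((4/3)*p1 + (2/3)*(-p2)) ((2/3)*p1 + (1/3)*(-p2))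
      ((2/3)*p1 + (4/3)*(-p2)) 0 (100 * (D * w))"
    using assms by (intro near_kkt_first_active) (auto simp: cone_bounded_reflect)
  from near_kkt_reflect[OF this] show ?thesis by simp
qed

lemma near_kkt_both_active:
  assumes w: "0 \<le> w" and D: "1 \<le> D"
    and dom: "-2*p1 + p2 \<ge> -w" "-2*p1 - p2 \<ge> -w"
  shows "near_kkt p1 p2 0 0 (-p1 + (1/2)*p2) (-p1 - (1/2)*p2) (100 * (D * w))"
proof -
  define W where "W = D * w"
  have "w \<le> W" using mult_right_mono[OF D w] by (simp add: W_def)
  consider "-2*p1 + p2 \<ge> 0" "-2*p1 - p2 \<ge> 0" | "-2*p1 + p2 < 0" "p1 - 2*p2 \<ge> 0"
    | "-2*p1 - p2 < 0" "p1 + 2*p2 \<ge> 0"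
    | "p1 - 2*p2 < 0" "p1 + 2*p2 < 0" "-2*p1 + p2 < 0 \<or> -2*p1 - p2 < 0"
    by linarith
  then show ?thesis
  proof cases
    case 1
    then show ?thesis using w D by (intro near_kkt_self kkt_both_active) auto
  next
    case 2
    have "kkt p1 p2 ((4/3)*p1 - (2/3)*p2) (-(2/3)*p1 + (1/3)*p2) 0 ((2/3)*p1 - (4/3)*p2)"
      using 2 by (intro kkt_second_active) auto
    then show ?thesis
      unfolding W_def[symmetric]
      by (rule near_kktI) (use 2 dom \<open>w \<le> W\<close> in \<open>simp add: abs_real_def; linarith\<close>)
  next
    case 3
    have "kkt p1 p2 ((4/3)*p1 + (2/3)*p2) ((2/3)*p1 + (1/3)*p2) ((2/3)*p1 + (4/3)*p2) 0"
      using 3 by (intro kkt_first_active) auto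
    then show ?thesis
      unfolding W_def[symmetric]
      by (rule near_kktI) (use 3 dom \<open>w \<le> W\<close> in \<open>simp add: abs_real_def; linarith\<close>)
  next
    case 4
    with dom \<open>w \<le> W\<close> show ?thesis
      unfolding W_def[symmetric] by (intro near_kkt_small) (simp add: abs_real_def; linarith)+
  qed
qed

lemma kkt_error_bound:
  assumes residual: "\<bar>x1 - p1 - (1/2)*y1 - (1/2)*y2\<bar> \<le> N" "\<bar>-x2 - p2 + y1 - y2\<bar> \<le> N"
      "\<bar>-(1/2)*x1 + x2 - a1\<bar> \<le> N" "\<bar>-(1/2)*x1 - x2 - a2\<bar> \<le> N"
      "\<bar>y1 - v1\<bar> \<le> N" "\<bar>y2 - v2\<bar> \<le> N"
    and sign: "a1 \<le> 0" "a2 \<le> 0" "v1 \<ge> 0" "v2 \<ge> 0"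
    and compl: "a1 * v1 = 0" "a2 * v2 = 0"
    and D: "1 \<le> D" and cone: "cone_bounded D p1 p2"
  shows "near_kkt p1 p2 x1 x2 y1 y2 (1220 * (D * N))"
proof -
  note R = residual[unfolded abs_le_iff]
  have "0 \<le> N" using residual(1) by linarith
  then have "N \<le> D * N" using mult_right_mono[OF D] by simp
  then have bound: "20*N + 100 * (D * (12*N)) \<le> 1220 * (D * N)" by simp
  consider "v1 = 0" "v2 = 0" | "a1 = 0" "v2 = 0" | "v1 = 0" "a2 = 0" | "a1 = 0" "a2 = 0"
    using compl by auto
  then have "near_kkt p1 p2 x1 x2 y1 y2 (20*N + 100 * (D * (12*N)))"
  proof cases
    case 1
    have "near_kkt p1 p2 p1 (-p2) 0 0 (100 * (D * (12*N)))"
      by (rule near_kkt_inactive[OF _ D cone]) (use 1 R sign in linarith)+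
    then show ?thesis
      by (rule near_kkt_trans) (use 1 R sign in \<open>simp add: abs_real_def; linarith\<close>)
  next
    case 2
    have "near_kkt p1 p2 ((4/3)*p1 + (2/3)*p2) ((2/3)*p1 + (1/3)*p2) ((2/3)*p1 + (4/3)*p2) 0
        (100 * (D * (12*N)))"
      by (rule near_kkt_first_active[OF _ D cone]) (use 2 R sign in linarith)+
    then show ?thesis
      by (rule near_kkt_trans) (use 2 R sign in \<open>simp add: abs_real_def; linarith\<close>)
  next
    case 3
    have "near_kkt p1 p2 ((4/3)*p1 - (2/3)*p2) (-(2/3)*p1 + (1/3)*p2) 0 ((2/3)*p1 - (4/3)*p2)
        (100 * (D * (12*N)))"
      by (rule near_kkt_second_active[OF _ D cone]) (use 3 R sign in linarith)+
    then show ?thesis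
      by (rule near_kkt_trans) (use 3 R sign in \<open>simp add: abs_real_def; linarith\<close>)
  next
    case 4
    have "near_kkt p1 p2 0 0 (-p1 + (1/2)*p2) (-p1 - (1/2)*p2) (100 * (D * (12*N)))"
      by (rule near_kkt_both_active[OF _ D]) (use 4 R sign in linarith)+
    then show ?thesis
      by (rule near_kkt_trans) (use 4 R sign in \<open>simp add: abs_real_def; linarith\<close>)
  qed
  then show ?thesis using bound by (rule near_kkt_mono)
qed

lemma abs_coordinates_le_norm:
  fixes a b c d e f :: real
  shows "\<bar>a\<bar> \<le> norm ((a, b), ((c, d), (e, f))) \<and> \<bar>b\<bar> \<le> norm ((a, b), ((c, d), (e, f))) \<and>
    \<bar>c\<bar> \<le> norm ((a, b), ((c, d), (e, f))) \<and> \<bar>d\<bar> \<le> norm ((a, b), ((c, d), (e, f))) \<and>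
    \<bar>e\<bar> \<le> norm ((a, b), ((c, d), (e, f))) \<and> \<bar>f\<bar> \<le> norm ((a, b), ((c, d), (e, f)))"
proof -
  have outer: "norm (a, b) \<le> norm ((a, b), ((c, d), (e, f)))"
      "norm ((c, d), (e, f)) \<le> norm ((a, b), ((c, d), (e, f)))"
    by (rule norm_fst_le norm_snd_le)+
  have inner: "norm (c, d) \<le> norm ((c, d), (e, f))" "norm (e, f) \<le> norm ((c, d), (e, f))"
    by (rule norm_fst_le norm_snd_le)+
  have "\<bar>a\<bar> \<le> norm (a, b)" "\<bar>b\<bar> \<le> norm (a, b)" "\<bar>c\<bar> \<le> norm (c, d)" "\<bar>d\<bar> \<le> norm (c, d)"
      "\<bar>e\<bar> \<le> norm (e, f)" "\<bar>f\<bar> \<le> norm (e, f)"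
    using norm_fst_le norm_snd_le real_norm_def by metis+
  with outer inner show ?thesis by linarith
qed

lemma dist_le_sum_abs:
  fixes x1 x2 y1 y2 x1' x2' y1' y2' :: real
  shows "dist ((x1, x2), (y1, y2)) ((x1', x2'), (y1', y2'))
    \<le> \<bar>x1 - x1'\<bar> + \<bar>x2 - x2'\<bar> + \<bar>y1 - y1'\<bar> + \<bar>y2 - y2'\<bar>"
proof -
  have "dist ((x1, x2), (y1, y2)) ((x1', x2'), (y1', y2'))
      = norm ((x1 - x1', x2 - x2'), (y1 - y1', y2 - y2'))"
    by (simp add: dist_norm)
  also have "\<dots> \<le> norm (x1 - x1', x2 - x2') + norm (y1 - y1', y2 - y2')"
    by (rule norm_Pair_le)
  also have "\<dots> \<le> (\<bar>x1 - x1'\<bar> + \<bar>x2 - x2'\<bar>) + (\<bar>y1 - y1'\<bar> + \<bar>y2 - y2'\<bar>)"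
    using norm_Pair_le[of "x1 - x1'" "x2 - x2'"] norm_Pair_le[of "y1 - y1'" "y2 - y2'"] by simp
  finally show ?thesis by simp
qed

lemma Gamma_map_error_bound:
  assumes D: "1 \<le> D" and cone: "cone_bounded D (fst p) (snd p)" and c: "c \<in> C_set"
  shows "\<exists>\<eta>\<in>Gamma_map p. dist \<xi> \<eta> \<le> 1220 * D * dist (g_map p \<xi>) c"
proof -
  obtain p1 p2 where p: "p = (p1, p2)" by force
  obtain x1 x2 y1 y2 where \<xi>: "\<xi> = ((x1, x2), (y1, y2))" by (metis prod.collapse)
  obtain a1 a2 v1 v2 where c_eq: "c = (0, ((a1, a2), (v1, v2)))"
    and sign: "a1 \<le> 0" "a2 \<le> 0" "v1 \<ge> 0" "v2 \<ge> 0" and compl: "a1 * v1 = 0" "a2 * v2 = 0"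
    using c unfolding C_set_def gph_N_orthant_def by auto
  define N where "N = dist (g_map p \<xi>) c"
  have residual: "g_map p \<xi> - c = ((x1 - p1 - (1/2)*y1 - (1/2)*y2, -x2 - p2 + y1 - y2),
      ((-(1/2)*x1 + x2 - a1, -(1/2)*x1 - x2 - a2), (y1 - v1, y2 - v2)))"
    unfolding p \<xi> c_eq g_map_def G_map_def phi_map_def by simp
  have "norm (g_map p \<xi> - c) = N"
    unfolding N_def by (simp add: dist_norm)
  then have "near_kkt p1 p2 x1 x2 y1 y2 (1220 * (D * N))"
    using abs_coordinates_le_norm residual cone p
    by (intro kkt_error_bound[OF _ _ _ _ _ _ sign compl D]) auto
  then obtain x1' x2' y1' y2' where sol: "kkt p1 p2 x1' x2' y1' y2'"
    and close: "\<bar>x1 - x1'\<bar> + \<bar>x2 - x2'\<bar> + \<bar>y1 - y1'\<bar> + \<bar>y2 - y2'\<bar> \<le> 1220 * (D * N)"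
    unfolding near_kkt_def by blast
  have "((x1', x2'), (y1', y2')) \<in> Gamma_map p"
    using sol by (simp add: p Gamma_map_eq_kkt)
  moreover have "dist \<xi> ((x1', x2'), (y1', y2')) \<le> 1220 * D * N"
    using dist_le_sum_abs[of x1 x2 y1 y2 x1' x2' y1' y2'] close by (simp add: \<xi>)
  ultimately show ?thesis unfolding N_def by blast
qed

lemma infdist_le_mult_infdist:
  fixes \<xi> :: "'a::metric_space" and z :: "'b::metric_space"
  assumes "C \<noteq> {}" "\<kappa> > 0" and pointwise: "\<And>c. c \<in> C \<Longrightarrow> \<exists>\<eta>\<in>S. dist \<xi> \<eta> \<le> \<kappa> * dist z c"
  shows "infdist \<xi> S \<le> \<kappa> * infdist z C"
proof -
  have "infdist \<xi> S / \<kappa> \<le> dist z c" if c: "c \<in> C" for c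
  proof -
    obtain \<eta> where "\<eta> \<in> S" "dist \<xi> \<eta> \<le> \<kappa> * dist z c"
      using pointwise[OF c] by blast
    then have "infdist \<xi> S \<le> \<kappa> * dist z c"
      by (rule infdist_le2)
    then show ?thesis using \<open>\<kappa> > 0\<close> by (simp add: pos_divide_le_eq mult.commute)
  qed
  then have "infdist \<xi> S / \<kappa> \<le> infdist z C"
    unfolding infdist_notempty[OF \<open>C \<noteq> {}\<close>] by (intro cINF_greatest \<open>C \<noteq> {}\<close>)
  then show ?thesis using \<open>\<kappa> > 0\<close> by (simp add: pos_divide_le_eq mult.commute)
qed

lemma robinson_stableI:
  assumes "open V" "pbar \<in> V" "\<kappa> \<ge> 0"
    and S: "\<And>p. S p = {\<eta>. g p \<eta> \<in> C}"
    and "\<And>p. p \<in> P \<inter> V \<Longrightarrow> S p \<noteq> {}"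
    and "\<And>p \<xi>. p \<in> P \<inter> V \<Longrightarrow> infdist \<xi> (S p) \<le> \<kappa> * infdist (g p \<xi>) C"
  shows "robinson_stable P g C pbar \<xi>bar"
  unfolding robinson_stable_def S[symmetric]
  using assms by (intro exI[of _ \<kappa>] conjI exI[of _ V] exI[of _ UNIV]) auto

lemma lipschitz_like_of_error_bound:
  fixes g :: "'p::metric_space \<Rightarrow> 'x::metric_space \<Rightarrow> 'z::metric_space"
  assumes V: "open V" "pbar \<in> V" and \<kappa>: "\<kappa> \<ge> 0"
    and S: "\<And>p. S p = {\<eta>. g p \<eta> \<in> C}"
    and nonempty: "\<And>p. p \<in> P \<inter> V \<Longrightarrow> S p \<noteq> {}"
    and error_bound: "\<And>p \<xi>. p \<in> P \<inter> V \<Longrightarrow> infdist \<xi> (S p) \<le> \<kappa> * infdist (g p \<xi>) C"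
    and lipschitz: "\<And>p p' \<xi>. dist (g p \<xi>) (g p' \<xi>) \<le> dist p p'"
  shows "lipschitz_like P S pbar \<xi>bar"
  unfolding lipschitz_like_def
proof (intro exI conjI ballI)
  fix p p' \<xi> assume p: "p \<in> P \<inter> V" and p': "p' \<in> P \<inter> V" and \<xi>: "\<xi> \<in> S p \<inter> UNIV"
  show "\<exists>\<xi>'\<in>S p'. dist \<xi> \<xi>' \<le> (\<kappa> + 1) * dist p p'"
  proof (cases "p = p'")
    case True
    with \<xi> show ?thesis by auto
  next
    case False
    have "g p \<xi> \<in> C" using \<xi> S by auto
    then have "infdist (g p' \<xi>) C \<le> dist p p'"
      using lipschitz[of p' \<xi> p] dist_commute by (metis infdist_le2)
    then have "infdist \<xi> (S p') \<le> \<kappa> * dist p p'"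
      using error_bound[OF p', of \<xi>] mult_left_mono[OF _ \<kappa>] by (meson order.trans)
    also have "\<dots> < (\<kappa> + 1) * dist p p'"
      using False by (simp add: distrib_right)
    finally have "(INF \<eta>\<in>S p'. dist \<xi> \<eta>) < (\<kappa> + 1) * dist p p'"
      unfolding infdist_notempty[OF nonempty[OF p']] .
    then show ?thesis
      unfolding cINF_less_iff[OF nonempty[OF p'] bdd_below_image_dist] by (auto intro: less_imp_le)
  qed
qed (use V \<kappa> in auto)

lemma in_contingent_cone_of_seq:
  fixes f :: "nat \<Rightarrow> real \<times> real"
  assumes "\<And>k. f k \<in> P" "\<And>k. fst (f k) > 0" "decseq (\<lambda>k. fst (f k))"
    and "(\<lambda>k. fst (f k)) \<longlonglongrightarrow> 0" "(\<lambda>k. snd (f k) / fst (f k)) \<longlonglongrightarrow> s"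
  shows "(1, s) \<in> contingent_cone P 0"
proof -
  have "(\<lambda>k. (1, snd (f k) / fst (f k))) \<longlonglongrightarrow> (1, s)"
    using assms(5) by (intro tendsto_Pair tendsto_const)
  moreover have "0 + fst (f k) *\<^sub>R (1, snd (f k) / fst (f k)) \<in> P" for k
    using assms(1,2)[of k] by (simp add: prod_eq_iff)
  ultimately show ?thesis
    unfolding contingent_cone_def using assms(2-4)
    by (intro CollectI exI[of _ "\<lambda>k. fst (f k)"] exI[of _ "\<lambda>k. (1, snd (f k) / fst (f k))"]) blast
qed

lemma sector_bound_of_not_in_contingent_cone:
  assumes "(1, s) \<notin> contingent_cone P 0"
  shows "\<exists>r>0. \<exists>\<delta>>0. \<forall>p\<in>P. 0 < fst p \<and> fst p < r \<longrightarrow> \<delta> * fst p \<le> \<bar>snd p - s * fst p\<bar>"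
proof (rule ccontr)
  define e :: "nat \<Rightarrow> real" where "e n = inverse (real (Suc n))" for n
  define close where "close n q \<longleftrightarrow> q \<in> P \<and> 0 < fst q \<and> fst q < e n \<and>
      \<bar>snd q - s * fst q\<bar> < e n * fst q" for n q
  have e_pos: "e n > 0" for n unfolding e_def by simp
  assume "\<not> ?thesis"
  then have counterexample: "\<exists>q\<in>P. 0 < fst q \<and> fst q < r \<and> \<bar>snd q - s * fst q\<bar> < \<delta> * fst q"
    if "r > 0" "\<delta> > 0" for r \<delta>
    using that by (meson not_le)
  have dense: "\<exists>q. close n q \<and> fst q < r" if r: "r > 0" for n r
  proof -
    obtain q where "q \<in> P" "0 < fst q" "fst q < min r (e n)" "\<bar>snd q - s * fst q\<bar> < e n * fst q"
      using counterexample[of "min r (e n)" "e n"] e_pos[of n] r by auto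
    then show ?thesis by (intro exI[of _ q]) (simp add: close_def)
  qed
  have "\<exists>f. \<forall>n. close n (f n) \<and> fst (f (Suc n)) \<le> fst (f n)"
  proof (rule dependent_nat_choice)
    show "\<exists>q. close 0 q" using dense[where n = 0 and r = 1] by auto
  next
    fix q n assume "close n q"
    then show "\<exists>q'. close (Suc n) q' \<and> fst q' \<le> fst q"
      using dense[where n = "Suc n" and r = "fst q"] unfolding close_def by force
  qed
  then obtain f where f: "\<And>n. close n (f n)" "\<And>n. fst (f (Suc n)) \<le> fst (f n)" by blast
  have e_lim: "e \<longlonglongrightarrow> 0" unfolding e_def by (rule LIMSEQ_inverse_real_of_nat)
  have "(\<lambda>k. fst (f k)) \<longlonglongrightarrow> 0"
    using f(1) by (intro Lim_null_comparison[OF _ e_lim]) (auto simp: close_def less_imp_le)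
  moreover have "(\<lambda>k. snd (f k) / fst (f k) - s) \<longlonglongrightarrow> 0"
  proof (rule Lim_null_comparison[OF _ e_lim], intro always_eventually allI)
    fix k
    have "0 < fst (f k)" "\<bar>snd (f k) - s * fst (f k)\<bar> < e k * fst (f k)"
      using f(1)[of k] unfolding close_def by auto
    moreover have "snd (f k) / fst (f k) - s = (snd (f k) - s * fst (f k)) / fst (f k)"
      using \<open>0 < fst (f k)\<close> by (simp add: field_simps)
    ultimately show "norm (snd (f k) / fst (f k) - s) \<le> e k"
      by (simp add: divide_le_eq less_imp_le)
  qed
  ultimately have "(1, s) \<in> contingent_cone P 0"
    using f unfolding close_def LIM_zero_iff
    by (intro in_contingent_cone_of_seq) (auto intro: decseq_SucI)
  with assms show False by simp
qed

lemma cone_bounded_near_zero: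
  fixes P :: "(real \<times> real) set"
  assumes "(1, 1/2) \<notin> contingent_cone P 0" "(1, -1/2) \<notin> contingent_cone P 0"
  shows "\<exists>r>0. \<exists>D\<ge>1. \<forall>p\<in>P. norm p < r \<longrightarrow> cone_bounded D (fst p) (snd p)"
proof -
  obtain r1 \<delta>1 where r1: "r1 > 0" "\<delta>1 > 0"
    and sector1: "\<forall>p\<in>P. 0 < fst p \<and> fst p < r1 \<longrightarrow> \<delta>1 * fst p \<le> \<bar>snd p - (1/2) * fst p\<bar>"
    using sector_bound_of_not_in_contingent_cone[OF assms(1)] by blast
  obtain r2 \<delta>2 where r2: "r2 > 0" "\<delta>2 > 0"
    and sector2: "\<forall>p\<in>P. 0 < fst p \<and> fst p < r2 \<longrightarrow> \<delta>2 * fst p \<le> \<bar>snd p - (-1/2) * fst p\<bar>"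
    using sector_bound_of_not_in_contingent_cone[OF assms(2)] by blast
  define D where "D = max 1 (max (1/\<delta>1) (1/\<delta>2))"
  have le_mult_D: "t \<le> D * A" if "\<delta> > 0" "\<delta> * t \<le> A" "1/\<delta> \<le> D" "A \<ge> 0" for \<delta> t A
  proof -
    have "t \<le> (1/\<delta>) * A" using that by (simp add: pos_le_divide_eq mult.commute)
    also have "\<dots> \<le> D * A" using that by (intro mult_right_mono)
    finally show ?thesis .
  qed
  have "cone_bounded D (fst p) (snd p)" if "p \<in> P" "norm p < min r1 r2" for p
    unfolding cone_bounded_def
  proof (intro impI conjI)
    assume "fst p > 0"
    moreover have "fst p < r1" "fst p < r2"
      using that(2) norm_fst_le[of "fst p" "snd p"] by auto
    ultimately have "\<delta>1 * fst p \<le> \<bar>snd p - (1/2) * fst p\<bar>" "\<delta>2 * fst p \<le> \<bar>snd p - (-1/2) * fst p\<bar>"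
      using sector1 sector2 \<open>p \<in> P\<close> by blast+
    moreover have "\<bar>snd p - (1/2) * fst p\<bar> \<le> \<bar>fst p - 2 * snd p\<bar>"
        "\<bar>snd p - (-1/2) * fst p\<bar> \<le> \<bar>fst p + 2 * snd p\<bar>"
      by arith+
    ultimately have "\<delta>2 * fst p \<le> \<bar>fst p + 2 * snd p\<bar>" "\<delta>1 * fst p \<le> \<bar>fst p - 2 * snd p\<bar>"
      by linarith+
    then show "fst p \<le> D * \<bar>fst p + 2 * snd p\<bar>" "fst p \<le> D * \<bar>fst p - 2 * snd p\<bar>"
      by (intro le_mult_D[OF r2(2)] le_mult_D[OF r1(2)]; simp add: D_def)+
  qed
  moreover have "min r1 r2 > 0" "D \<ge> 1" using r1 r2 by (auto simp: D_def)
  ultimately show ?thesis by blast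
qed

lemma dist_g_map: "dist (g_map p \<xi>) (g_map p' \<xi>) = dist p p'"
proof -
  have "g_map p \<xi> - g_map p' \<xi> = (p' - p, 0)"
    by (simp add: g_map_def G_map_def prod_eq_iff)
  then show ?thesis by (simp add: dist_norm norm_Pair norm_minus_commute)
qed

theorem mainTheorem16:
  fixes P :: "(real \<times> real) set"
  assumes "0 \<in> P"
    and "(1, 1/2) \<notin> contingent_cone P 0"
    and "(1, -1/2) \<notin> contingent_cone P 0"
  shows "robinson_stable P g_map C_set 0 ((0, 0), (0, 0))
         \<and> lipschitz_like P Gamma_map 0 ((0, 0), (0, 0))"
proof -
  obtain r D where r: "r > 0" and D: "D \<ge> 1"
    and cone: "\<And>p. p \<in> P \<Longrightarrow> norm p < r \<Longrightarrow> cone_bounded D (fst p) (snd p)"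
    using cone_bounded_near_zero[OF assms(2,3)] by blast
  have C_nonempty: "C_set \<noteq> {}"
    unfolding C_set_def gph_N_orthant_def by auto
  have error_bound: "infdist \<xi> (Gamma_map p) \<le> (1220 * D) * infdist (g_map p \<xi>) C_set"
    if p: "p \<in> P \<inter> ball 0 r" for p \<xi>
  proof (rule infdist_le_mult_infdist[OF C_nonempty])
    have "cone_bounded D (fst p) (snd p)"
      using p cone[of p] by simp
    then show "\<exists>\<eta>\<in>Gamma_map p. dist \<xi> \<eta> \<le> 1220 * D * dist (g_map p \<xi>) c" if "c \<in> C_set" for c
      using Gamma_map_error_bound D that by blast
  qed (use D in simp)
  have "robinson_stable P g_map C_set 0 ((0, 0), (0, 0))"
    by (rule robinson_stableI[where V = "ball 0 r" and \<kappa> = "1220 * D", OF _ _ _ Gamma_map_def _ error_bound])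
      (use r D Gamma_map_nonempty in auto)
  moreover have "lipschitz_like P Gamma_map 0 ((0, 0), (0, 0))"
    by (rule lipschitz_like_of_error_bound[where V = "ball 0 r" and \<kappa> = "1220 * D", OF _ _ _ Gamma_map_def _ error_bound dist_g_map[THEN eq_refl]])
      (use r D Gamma_map_nonempty in auto)
  ultimately show ?thesis ..
qed

end
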